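(* Let $p$ be a polynomial of degree $m$ with $p(t)=dt^m+O(t^{m-1})$, let $q$ be a polynomial of degree $d\ge1$ with $q(t)=t^d+O(t^{d-1})$ as $t\to\infty$, let $c\in\mathbb{C}$, $g(z)=\int_0^zp(t)e^{q(t)}dt+c$, and $f(z)=z-g(z)/g'(z)$. Let $\lambda=(d-1-m)/d$. Let $R>0$ be such that all critical values of $q$ lie in $D(0,R)$ and $2^{-d}|z|^d\le|q(z)|\le2^d|z|^d$ for $|z|\ge\frac12R^{1/d}$, let $G=\mathbb{C}\setminus(\overline{D(0,R)}\cup[0,\infty))$, let $S$ be a component of $q^{-1}(G)$, let $\varphi$ be the branch of $q^{-1}$ on $G$ with $\varphi(G)=S$, and let $c_S=\lim_{x\to-\infty,\,x\in(-\infty,-R)}g(\varphi(x))$. Then $$f(\varphi(w))=\varphi(w)-\frac{1}{q'(\varphi(w))}\Big(1+\frac{\lambda}{w}+O\big(|w|^{-1-1/d}\big)\Big)-\frac{c_Se^{-w}}{p(\varphi(w))}$$ as $w\to\infty$ in $G$.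
   Context: $D(z_0,r)$ is the open disk. The limit defining $c_S$ exists; $c_S$ is the (unique) constant for which $g(\varphi(w))=c_S+\frac{p(\varphi(w))}{q'(\varphi(w))}(1+\lambda/w+O(|w|^{-1-1/d}))e^w$ as $w\to\infty$ in $G$. *)

theory Defs
  imports "HOL-Complex_Analysis.Complex_Analysis" "HOL-Computational_Algebra.Polynomial"
    "HOL-Library.Landau_Symbols"
begin

text \<open>The entire function g(z) = integral from 0 to z of p(t) e^(q(t)) dt + c,
  the integral taken along the segment [0,z] (path independent, integrand entire).\<close>
definition gfun :: "complex poly \<Rightarrow> complex poly \<Rightarrow> complex \<Rightarrow> complex \<Rightarrow> complex" where
  "gfun p q c z = contour_integral (linepath 0 z) (\<lambda>t. poly p t * exp (poly q t)) + c"

definition newton_f :: "complex poly \<Rightarrow> complex poly \<Rightarrow> complex \<Rightarrow> complex \<Rightarrow> complex" where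
  "newton_f p q c z = z - gfun p q c z / (poly p z * exp (poly q z))"

definition Gdom :: "real \<Rightarrow> complex set" where
  "Gdom R = UNIV - (cball 0 R \<union> {complex_of_real x | x. x \<ge> 0})"

end

theory Submission
  imports Defs
begin

(* Integrating by parts twice, g = r e^q + h with r = p / q' - A1 / q'^3 and h' = (A2 / q'^4) e^q,
   where (p / q')' = A1 / q'^2 and (A1 / q'^3)' = A2 / q'^4.  On G put t = phi w, so that
   e^q(t) = e^w and |phi w|^d is comparable to |w|.  Then K(w) = g(phi w) - r(phi w) e^w has
   derivative (A2 / q'^5)(phi w) e^w = O(|w|^a e^(Re w)) with a = (m + 1 - 3d) / d.  Integrating
   along horizontal rays towards -infinity (near the positive axis after a vertical detour) shows
   that K tends to a constant c_S there and that K(w) - c_S = O(|w|^a e^(Re w)) on G.  Inserting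
   this into f = z - g / g' gives the expansion: the contribution of K - c_S is
   O(|w|^(a - b)) = O(|w|^-2) with b = (m + 1 - d) / d, and A1 / (p q'^2) + lam / w is
   O(|w|^(-1 - 1/d)) because the leading coefficients of d A1 q and (d - 1 - m) p q'^2 cancel. *)

section \<open>Degree bounds and the numerators of integration by parts\<close>

text \<open>Degree at most \<open>e\<close>, the zero polynomial having degree \<open>-\<infinity>\<close>; real bounds accommodate the
  negative values that occur for small degrees.\<close>
definition poly_deg_le :: "'a::zero poly \<Rightarrow> real \<Rightarrow> bool" where
  "poly_deg_le P e \<longleftrightarrow> P = 0 \<or> real (degree P) \<le> e"

lemma poly_deg_le_degree [simp]: "poly_deg_le P (real (degree P))"
  by (simp add: poly_deg_le_def)

lemma poly_deg_le_mono: "poly_deg_le P e \<Longrightarrow> e \<le> e' \<Longrightarrow> poly_deg_le P e'"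
  by (auto simp: poly_deg_le_def)

lemma poly_deg_le_mult:
  fixes P Q :: "'a::comm_semiring_0 poly"
  shows "poly_deg_le P e \<Longrightarrow> poly_deg_le Q e' \<Longrightarrow> poly_deg_le (P * Q) (e + e')"
  using degree_mult_le[of P Q] by (auto simp: poly_deg_le_def)

lemma poly_deg_le_add:
  fixes P Q :: "'a::comm_monoid_add poly"
  shows "poly_deg_le P e \<Longrightarrow> poly_deg_le Q e \<Longrightarrow> poly_deg_le (P + Q) e"
  using degree_add_le[of P "degree P + degree Q" Q] degree_add_le_max[of P Q]
  by (cases "P = 0 \<or> Q = 0") (auto simp: poly_deg_le_def max_def split: if_splits)

lemma poly_deg_le_diff:
  fixes P Q :: "'a::ab_group_add poly"
  shows "poly_deg_le P e \<Longrightarrow> poly_deg_le Q e \<Longrightarrow> poly_deg_le (P - Q) e"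
  using degree_diff_le_max[of P Q]
  by (cases "P = 0 \<or> Q = 0") (auto simp: poly_deg_le_def max_def split: if_splits)

lemma poly_deg_le_smult:
  fixes P :: "'a::comm_semiring_0 poly"
  shows "poly_deg_le P e \<Longrightarrow> poly_deg_le (smult c P) e"
  using degree_smult_le[of c P] by (auto simp: poly_deg_le_def)

lemma poly_deg_le_pderiv:
  fixes P :: "'a::{idom,ring_char_0} poly"
  shows "poly_deg_le P e \<Longrightarrow> poly_deg_le (pderiv P) (e - 1)"
  by (cases "degree P = 0") (auto simp: poly_deg_le_def pderiv_eq_0_iff degree_pderiv)

lemma poly_deg_le_if_coeff_eq_0:
  assumes "poly_deg_le P (real n)" "coeff P n = 0"
  shows "poly_deg_le P (real n - 1)"
proof (cases "P = 0")
  case False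
  with assms have "degree P < n"
    by (auto simp: poly_deg_le_def order.order_iff_strict)
  then show ?thesis by (auto simp: poly_deg_le_def)
qed (simp add: poly_deg_le_def)

lemma coeff_mult_top:
  fixes P Q :: "'a::comm_semiring_1 poly"
  assumes "degree P \<le> i" "degree Q \<le> j"
  shows "coeff (P * Q) (i + j) = coeff P i * coeff Q j"
proof -
  have "coeff (P * Q) (i + j) = (\<Sum>k\<le>i+j. coeff P k * coeff Q (i + j - k))"
    by (rule coeff_mult)
  also have "\<dots> = (\<Sum>k\<le>i+j. if k = i then coeff P i * coeff Q j else 0)"
  proof (rule sum.cong[OF refl])
    fix k assume "k \<in> {..i+j}"
    consider "k < i" | "k = i" | "i < k" by linarith
    then show "coeff P k * coeff Q (i + j - k) = (if k = i then coeff P i * coeff Q j else 0)"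
      by cases (use assms in \<open>auto simp: coeff_eq_0\<close>)
  qed
  also have "\<dots> = coeff P i * coeff Q j" by simp
  finally show ?thesis .
qed

definition quot_deriv_num :: "'a::idom poly \<Rightarrow> nat \<Rightarrow> 'a poly \<Rightarrow> 'a poly" where
  "quot_deriv_num q k P = pderiv P * pderiv q - smult (of_nat k) (P * pderiv (pderiv q))"

lemma has_field_derivative_quot_pderiv_power:
  fixes P q :: "'a::real_normed_field poly"
  assumes "poly (pderiv q) t \<noteq> 0"
  shows "((\<lambda>t. poly P t / poly (pderiv q) t ^ k) has_field_derivative
           poly (quot_deriv_num q k P) t / poly (pderiv q) t ^ Suc k) (at t)"
proof -
  have "((\<lambda>t. poly (pderiv q) t ^ k) has_field_derivative
      of_nat k * (poly (pderiv (pderiv q)) t * poly (pderiv q) t ^ (k - 1))) (at t)"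
    using DERIV_power[OF poly_DERIV] by simp
  then have "((\<lambda>t. poly P t / poly (pderiv q) t ^ k) has_field_derivative
      (poly (pderiv P) t * poly (pderiv q) t ^ k
        - poly P t * (of_nat k * (poly (pderiv (pderiv q)) t * poly (pderiv q) t ^ (k - 1))))
      / (poly (pderiv q) t ^ k * poly (pderiv q) t ^ k)) (at t)"
    using assms by (intro DERIV_divide poly_DERIV) auto
  moreover have "(poly (pderiv P) t * poly (pderiv q) t ^ k
        - poly P t * (of_nat k * (poly (pderiv (pderiv q)) t * poly (pderiv q) t ^ (k - 1))))
      / (poly (pderiv q) t ^ k * poly (pderiv q) t ^ k)
      = poly (quot_deriv_num q k P) t / poly (pderiv q) t ^ Suc k"
    using assms by (cases k) (auto simp: quot_deriv_num_def field_simps power_add[symmetric])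
  ultimately show ?thesis by simp
qed

lemma poly_deg_le_quot_deriv_num:
  fixes P q :: "'a::{idom,ring_char_0} poly"
  assumes "poly_deg_le P e"
  shows "poly_deg_le (quot_deriv_num q k P) (e + real (degree q) - 2)"
proof -
  have q1: "poly_deg_le (pderiv q) (real (degree q) - 1)"
    and q2: "poly_deg_le (pderiv (pderiv q)) (real (degree q) - 1 - 1)"
    by (intro poly_deg_le_pderiv poly_deg_le_degree)+
  show ?thesis
    unfolding quot_deriv_num_def
    using poly_deg_le_mult[OF poly_deg_le_pderiv[OF assms] q1] poly_deg_le_mult[OF assms q2]
    by (intro poly_deg_le_diff poly_deg_le_smult) (auto elim: poly_deg_le_mono)
qed

lemma coeff_quot_deriv_num_top:
  fixes P q :: "'a::{idom,ring_char_0} poly"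
  assumes P: "degree P \<le> n" and q: "degree q = d" "1 \<le> d" and nd: "2 \<le> n + d"
  shows "coeff (quot_deriv_num q k P) (n + d - 2)
           = (of_nat n - of_nat k * (of_nat d - 1)) * of_nat d * coeff P n * lead_coeff q"
proof -
  have q1: "coeff (pderiv q) (d - 1) = of_nat d * lead_coeff q"
    using q by (simp add: coeff_pderiv)
  have first: "coeff (pderiv P * pderiv q) (n + d - 2) = of_nat n * coeff P n * (of_nat d * lead_coeff q)"
  proof (cases n)
    case 0
    then have "pderiv P = 0" using P by (simp add: pderiv_eq_0_iff)
    then show ?thesis using 0 by simp
  next
    case (Suc n')
    have "coeff (pderiv P * pderiv q) (n' + (d - 1)) = coeff (pderiv P) n' * coeff (pderiv q) (d - 1)"
      using P q Suc by (intro coeff_mult_top) (auto simp: degree_pderiv)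
    then show ?thesis using Suc q1 q by (simp add: coeff_pderiv)
  qed
  have second: "coeff (P * pderiv (pderiv q)) (n + d - 2) = coeff P n * (of_nat (d - 1) * (of_nat d * lead_coeff q))"
  proof (cases "d = 1")
    case True
    then have "pderiv (pderiv q) = 0" using q by (simp add: pderiv_eq_0_iff degree_pderiv)
    then show ?thesis using True by simp
  next
    case False
    then have "coeff (P * pderiv (pderiv q)) (n + (d - 2)) = coeff P n * coeff (pderiv (pderiv q)) (d - 2)"
      using P q by (intro coeff_mult_top) (auto simp: degree_pderiv)
    moreover have "Suc (d - 2) = d - 1" "n + (d - 2) = n + d - 2" using False q by auto
    ultimately show ?thesis using q1 by (simp add: coeff_pderiv)
  qed
  show ?thesis
    unfolding quot_deriv_num_def coeff_diff coeff_smult first second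
    using q by (simp add: algebra_simps)
qed

text \<open>The numerator of \<open>A\<^sub>1 / (p q'\<^sup>2) + \<lambda> / q\<close> over the denominator \<open>d p q'\<^sup>2 q\<close> (see
  \<open>correction_num_quotient\<close>). Its degree drops by one because the leading coefficients cancel
  exactly for \<open>\<lambda> = (d - 1 - m) / d\<close>.\<close>
definition correction_num :: "'a::{idom,ring_char_0} poly \<Rightarrow> 'a poly \<Rightarrow> 'a poly" where
  "correction_num p q = smult (of_nat (degree q)) (quot_deriv_num q 1 p * q)
     + smult (of_nat (degree q) - 1 - of_nat (degree p)) (p * pderiv q ^ 2)"

lemma coeff_pderiv_power2_top:
  fixes q :: "'a::{idom,ring_char_0} poly"
  assumes "1 \<le> degree q"
  shows "coeff (pderiv q ^ 2) (2 * (degree q - 1)) = (of_nat (degree q) * lead_coeff q) ^ 2"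
proof -
  have "pderiv q \<noteq> 0" "degree (pderiv q) = degree q - 1"
    using assms by (simp_all add: pderiv_eq_0_iff degree_pderiv)
  then have "coeff (pderiv q ^ 2) (2 * (degree q - 1)) = lead_coeff (pderiv q) ^ 2"
    by (metis degree_power_eq lead_coeff_power)
  moreover have "lead_coeff (pderiv q) = of_nat (degree q) * lead_coeff q"
    using assms by (simp add: degree_pderiv coeff_pderiv)
  ultimately show ?thesis by simp
qed

lemma coeff_correction_num_top:
  fixes p q :: "'a::{idom,ring_char_0} poly"
  assumes q: "1 \<le> degree q" and nd: "2 \<le> degree p + degree q"
  shows "coeff (correction_num p q) (degree p + 2 * degree q - 2) = 0"
proof -
  define m d where "m = degree p" and "d = degree q"
  define n where "n = m + 2 * d - 2"
  have "degree (quot_deriv_num q 1 p) \<le> m + d - 2"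
    using poly_deg_le_quot_deriv_num[OF poly_deg_le_degree[of p], of q 1] nd
    by (auto simp: poly_deg_le_def m_def d_def)
  then have "coeff (quot_deriv_num q 1 p * q) ((m + d - 2) + d)
      = coeff (quot_deriv_num q 1 p) (m + d - 2) * lead_coeff q"
    unfolding d_def by (intro coeff_mult_top) simp_all
  moreover have "(m + d - 2) + d = n" using nd by (simp add: n_def m_def d_def)
  moreover have "coeff (quot_deriv_num q 1 p) (m + d - 2)
      = (of_nat m - (of_nat d - 1)) * of_nat d * lead_coeff p * lead_coeff q"
    using coeff_quot_deriv_num_top[of p m q d 1] nd q by (simp add: m_def d_def)
  ultimately have first: "coeff (quot_deriv_num q 1 p * q) n
      = (of_nat m - (of_nat d - 1)) * of_nat d * lead_coeff p * lead_coeff q * lead_coeff q"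
    by simp
  have "coeff (p * pderiv q ^ 2) (m + 2 * (d - 1)) = lead_coeff p * coeff (pderiv q ^ 2) (2 * (d - 1))"
    unfolding m_def d_def
    by (intro coeff_mult_top order_trans[OF degree_power_le]) (simp_all add: degree_pderiv)
  moreover have "m + 2 * (d - 1) = n" using q by (simp add: n_def d_def)
  ultimately have second: "coeff (p * pderiv q ^ 2) n = lead_coeff p * (of_nat d * lead_coeff q) ^ 2"
    using coeff_pderiv_power2_top[OF q] by (simp add: d_def)
  have "coeff (correction_num p q) n
      = of_nat d * ((of_nat m - (of_nat d - 1)) * of_nat d * lead_coeff p * lead_coeff q * lead_coeff q)
        + (of_nat d - 1 - of_nat m) * (lead_coeff p * (of_nat d * lead_coeff q) ^ 2)"
    unfolding correction_num_def coeff_add coeff_smult first second by (simp add: m_def d_def)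
  also have "\<dots> = 0" by (simp add: algebra_simps power2_eq_square)
  finally show ?thesis by (simp add: n_def m_def d_def)
qed

lemma poly_deg_le_correction_num:
  fixes p q :: "'a::{idom,ring_char_0} poly"
  assumes q: "1 \<le> degree q"
  shows "poly_deg_le (correction_num p q) (real (degree p) + 2 * real (degree q) - 3)"
proof (cases "2 \<le> degree p + degree q")
  case False
  then have "pderiv p = 0" "pderiv (pderiv q) = 0" "degree p = 0" "degree q = 1"
    using q by (simp_all add: pderiv_eq_0_iff degree_pderiv)
  then have "correction_num p q = 0"
    by (simp add: correction_num_def quot_deriv_num_def)
  then show ?thesis by (simp add: poly_deg_le_def)
next
  case True
  define n where "n = degree p + 2 * degree q - 2"
  have n: "real n = real (degree p) + 2 * real (degree q) - 2" using q by (simp add: n_def)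
  have "poly_deg_le (pderiv q ^ 2) (2 * (real (degree q) - 1))"
    using poly_deg_le_mult[OF poly_deg_le_pderiv poly_deg_le_pderiv, of q "real (degree q)" q "real (degree q)"]
    by (simp add: power2_eq_square)
  from poly_deg_le_mult[OF poly_deg_le_degree[of p] this]
  have "poly_deg_le (p * pderiv q ^ 2) (real n)"
    using n by (auto elim: poly_deg_le_mono)
  moreover have "poly_deg_le (quot_deriv_num q 1 p * q) (real n)"
    using poly_deg_le_mult[OF poly_deg_le_quot_deriv_num[OF poly_deg_le_degree[of p], of q 1] poly_deg_le_degree[of q]] n
    by (auto elim: poly_deg_le_mono)
  ultimately have "poly_deg_le (correction_num p q) (real n)"
    unfolding correction_num_def by (intro poly_deg_le_add poly_deg_le_smult)
  moreover have "coeff (correction_num p q) n = 0"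
    unfolding n_def by (rule coeff_correction_num_top[OF q True])
  ultimately have "poly_deg_le (correction_num p q) (real n - 1)"
    by (rule poly_deg_le_if_coeff_eq_0)
  then show ?thesis using n by simp
qed

lemma correction_num_quotient:
  fixes p q :: "complex poly"
  assumes "poly p t \<noteq> 0" "poly (pderiv q) t \<noteq> 0" "poly q t \<noteq> 0" "1 \<le> degree q"
  shows "poly (quot_deriv_num q 1 p) t / (poly p t * poly (pderiv q) t ^ 2)
           + of_real ((real (degree q) - 1 - real (degree p)) / real (degree q)) / poly q t
         = poly (correction_num p q) t / poly (smult (of_nat (degree q)) (p * pderiv q ^ 2 * q)) t"
  using assms by (simp add: correction_num_def field_simps power2_eq_square)

section \<open>Growth at infinity\<close>

lemma poly_bigtheta_powr:
  fixes P :: "complex poly"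
  assumes "P \<noteq> 0"
  shows "poly P \<in> \<Theta>[at_infinity](\<lambda>t. of_real (norm t powr real (degree P)))"
proof -
  have "poly P \<in> \<Theta>[at_infinity](\<lambda>t. t ^ degree P)"
    using assms by (intro bigthetaI_tendsto_norm[of "norm (lead_coeff P)"] tendsto_norm
        poly_divide_tendsto_aux) simp
  also have "(\<lambda>t::complex. t ^ degree P) \<in> \<Theta>[at_infinity](\<lambda>t. of_real (norm t powr real (degree P)))"
  proof -
    have "(\<lambda>t. norm (t ^ degree P))
        \<in> \<Theta>[at_infinity](\<lambda>t::complex. norm (complex_of_real (norm t powr real (degree P))))"
      by (rule bigthetaI_cong, rule eventually_at_infinityI[of 1])
        (subst powr_realpow, auto simp: norm_power)
    then show ?thesis by (rule landau_theta.norm_iff[THEN iffD1])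
  qed
  finally show ?thesis .
qed

lemma eventually_poly_nonzero_at_infinity:
  fixes P :: "complex poly"
  assumes "P \<noteq> 0"
  shows "\<forall>\<^sub>F t in at_infinity. poly P t \<noteq> 0"
proof -
  have "\<forall>\<^sub>F t in at_infinity. (of_real (norm t powr real (degree P)) :: complex) \<noteq> 0"
    by (rule eventually_at_infinityI[of 1]) auto
  then show ?thesis
    using eventually_nonzero_bigtheta[OF poly_bigtheta_powr[OF assms]] by blast
qed

lemma powr_bigo_powr_at_infinity:
  assumes "a \<le> b"
  shows "(\<lambda>t::complex. complex_of_real (norm t powr a)) \<in> O[at_infinity](\<lambda>t. of_real (norm t powr b))"
proof (rule bigoI[of _ 1])
  show "\<forall>\<^sub>F t in at_infinity. norm (complex_of_real (norm t powr a)) \<le> 1 * norm (complex_of_real (norm t powr b))"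
    by (rule eventually_at_infinityI[of 1]) (use assms in \<open>auto intro: powr_mono\<close>)
qed

lemma poly_bigo_powr:
  fixes P :: "complex poly"
  assumes "poly_deg_le P e"
  shows "poly P \<in> O[at_infinity](\<lambda>t. of_real (norm t powr e))"
proof (cases "P = 0")
  case True
  then have "poly P = (\<lambda>_. 0)" by auto
  then show ?thesis by simp
next
  case False
  then have "real (degree P) \<le> e" using assms by (simp add: poly_deg_le_def)
  with False show ?thesis
    using landau_o.big_trans[OF bigthetaD1[OF poly_bigtheta_powr] powr_bigo_powr_at_infinity] by blast
qed

lemma poly_quotient_bigo:
  fixes P Q :: "complex poly"
  assumes "poly_deg_le P e" "Q \<noteq> 0"
  shows "(\<lambda>t. poly P t / poly Q t) \<in> O[at_infinity](\<lambda>t. of_real (norm t powr (e - real (degree Q))))"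
proof -
  have "(\<lambda>t. of_real (norm t powr real (degree Q))) \<in> O[at_infinity](poly Q)"
    using bigthetaD2[OF poly_bigtheta_powr[OF assms(2)]] by (simp add: bigomega_iff_bigo)
  then have "(\<lambda>t. poly P t / poly Q t)
      \<in> O[at_infinity](\<lambda>t. of_real (norm t powr e) / of_real (norm t powr real (degree Q)))"
    using assms
    by (intro landau_o.big.divide eventually_poly_nonzero_at_infinity poly_bigo_powr)
      (auto intro: eventually_at_infinityI[of 1])
  then show ?thesis by (simp add: powr_diff)
qed

lemma poly_quotient_bigtheta:
  fixes P Q :: "complex poly"
  assumes "P \<noteq> 0" "Q \<noteq> 0"
  shows "(\<lambda>t. poly P t / poly Q t) \<in> \<Theta>[at_infinity](\<lambda>t. of_real (norm t powr (real (degree P) - real (degree Q))))"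
proof -
  have "(\<lambda>t. poly P t / poly Q t)
      \<in> \<Theta>[at_infinity](\<lambda>t. of_real (norm t powr real (degree P)) / of_real (norm t powr real (degree Q)))"
    using assms
    by (intro landau_theta.divide eventually_poly_nonzero_at_infinity poly_bigtheta_powr
        poly_bigtheta_powr[THEN bigtheta_sym[THEN iffD1]])
      (auto intro: eventually_at_infinityI[of 1])
  then show ?thesis by (simp add: powr_diff)
qed

abbreviation at_infinity_in :: "'a::real_normed_vector set \<Rightarrow> 'a filter" where
  "at_infinity_in S \<equiv> inf at_infinity (principal S)"

lemma eventually_at_infinity_in:
  "eventually P (at_infinity_in S) \<longleftrightarrow> (\<exists>B. \<forall>x\<in>S. B \<le> norm x \<longrightarrow> P x)"
  by (auto simp: eventually_inf_principal eventually_at_infinity)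

lemma eventually_mem_at_infinity_in: "\<forall>\<^sub>F w in at_infinity_in S. w \<in> S"
  by (simp add: eventually_inf_principal)

lemma eventually_norm_ge_at_infinity_in: "\<forall>\<^sub>F w in at_infinity_in S. B \<le> norm w"
  unfolding eventually_at_infinity_in by blast

lemma powr_bigo_powr_at_infinity_in:
  assumes "a \<le> b"
  shows "(\<lambda>w::complex. complex_of_real (norm w powr a)) \<in> O[at_infinity_in S](\<lambda>w. of_real (norm w powr b))"
  using powr_bigo_powr_at_infinity[OF assms] by (rule landau_o.big.filter_mono[rotated]) simp

lemma tendsto_zero_if_bigo:
  assumes "f \<in> O[F](g)" "(g \<longlongrightarrow> 0) F"
  shows "(f \<longlongrightarrow> 0) F"
proof -
  obtain c where "\<forall>\<^sub>F x in F. norm (f x) \<le> c * norm (g x)"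
    using assms(1) by (elim landau_o.bigE)
  moreover have "((\<lambda>x. c * norm (g x)) \<longlongrightarrow> 0) F"
    using assms(2) by (intro tendsto_mult_right_zero tendsto_norm_zero)
  ultimately show ?thesis by (rule Lim_null_comparison)
qed

lemma bigo_mult_exp:
  fixes f :: "'a \<Rightarrow> complex"
  assumes "f \<in> O[F](\<lambda>w. of_real (g w))"
  shows "(\<lambda>w. f w * exp (h w)) \<in> O[F](\<lambda>w. of_real (g w * exp (Re (h w))))"
proof -
  obtain c where "\<forall>\<^sub>F w in F. norm (f w) \<le> c * norm (complex_of_real (g w))"
    using assms by (elim landau_o.bigE)
  then have "\<forall>\<^sub>F w in F. norm (f w * exp (h w)) \<le> c * norm (complex_of_real (g w * exp (Re (h w))))"
    by eventually_elim (simp add: norm_mult abs_mult mult_right_mono mult.assoc)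
  then show ?thesis by (rule bigoI)
qed

section \<open>Integration by parts\<close>

lemma has_field_derivative_gfun: "(gfun p q c has_field_derivative poly p z * exp (poly q z)) (at z)"
proof -
  define f where "f = (\<lambda>t. poly p t * exp (poly q t))"
  have hol: "f holomorphic_on UNIV" unfolding f_def by (intro holomorphic_intros)
  have "contour_integral (linepath 0 b) f + contour_integral (linepath b b') f
          + contour_integral (linepath b' 0) f = 0" for b b'
  proof -
    have "(f has_contour_integral 0) (linepath 0 b +++ linepath b b' +++ linepath b' 0)"
      by (rule Cauchy_theorem_triangle, rule holomorphic_on_subset[OF hol]) auto
    then show ?thesis by (rule has_chain_integral_chain_integral3)
  qed
  then have "((\<lambda>z. contour_integral (linepath 0 z) f) has_field_derivative f z) (at z)"
    using holomorphic_on_imp_continuous_on[OF hol]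
    by (intro triangle_contour_integrals_starlike_primitive) auto
  then show ?thesis unfolding gfun_def f_def by (auto intro!: derivative_eq_intros)
qed

text \<open>The function \<open>r\<close> with \<open>g = r e\<^sup>q + h\<close> obtained by integrating by parts twice.\<close>
definition ibp_approx :: "complex poly \<Rightarrow> complex poly \<Rightarrow> complex \<Rightarrow> complex" where
  "ibp_approx p q t = poly p t / poly (pderiv q) t - poly (quot_deriv_num q 1 p) t / poly (pderiv q) t ^ 3"

lemma has_field_derivative_gfun_minus_ibp_approx:
  assumes "poly (pderiv q) t \<noteq> 0"
  shows "((\<lambda>t. gfun p q c t - ibp_approx p q t * exp (poly q t)) has_field_derivative
           poly (quot_deriv_num q 3 (quot_deriv_num q 1 p)) t / poly (pderiv q) t ^ 4 * exp (poly q t)) (at t)"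
proof -
  have "(ibp_approx p q has_field_derivative
      poly (quot_deriv_num q 1 p) t / poly (pderiv q) t ^ 2
        - poly (quot_deriv_num q 3 (quot_deriv_num q 1 p)) t / poly (pderiv q) t ^ 4) (at t)"
    using has_field_derivative_quot_pderiv_power[OF assms, of p 1]
      has_field_derivative_quot_pderiv_power[OF assms, of "quot_deriv_num q 1 p" 3]
    unfolding ibp_approx_def by (auto intro!: DERIV_diff simp: numeral_eq_Suc)
  then have "((\<lambda>t. gfun p q c t - ibp_approx p q t * exp (poly q t)) has_field_derivative
      poly p t * exp (poly q t)
        - ((poly (quot_deriv_num q 1 p) t / poly (pderiv q) t ^ 2
            - poly (quot_deriv_num q 3 (quot_deriv_num q 1 p)) t / poly (pderiv q) t ^ 4) * exp (poly q t)
           + exp (poly q t) * poly (pderiv q) t * ibp_approx p q t)) (at t)"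
    by (intro DERIV_diff DERIV_mult has_field_derivative_gfun DERIV_chain2[OF DERIV_exp poly_DERIV])
  then show ?thesis
    using assms by (simp add: ibp_approx_def field_simps power_eq_if)
qed

lemma powr_le_within_factor:
  fixes s w k a :: real
  assumes w: "0 < w" and lo: "w / k \<le> s" and hi: "s \<le> w * k" and k: "1 \<le> k"
  shows "s powr a \<le> k powr \<bar>a\<bar> * w powr a"
proof -
  have "0 < w / k" using w k by simp
  then have s: "0 < s" using lo by linarith
  show ?thesis
  proof (cases "0 \<le> a")
    case True
    then have "s powr a \<le> (w * k) powr a" using s hi by (intro powr_mono2) auto
    then show ?thesis using True w k by (simp add: powr_mult mult.commute)
  next
    case False
    then have "s powr a \<le> (w / k) powr a" using \<open>0 < w / k\<close> lo by (intro powr_mono2') auto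
    moreover have "(w / k) powr a = k powr (- a) * w powr a"
      using w k by (simp add: powr_divide powr_minus_divide)
    ultimately show ?thesis using False by simp
  qed
qed

lemma powr_le_const_mult_exp_half:
  fixes \<beta> :: real
  obtains C where "0 < C" "\<And>y. 0 \<le> y \<Longrightarrow> (1 + y) powr \<beta> \<le> C * exp (y / 2)"
proof (cases "\<beta> \<le> 0")
  case True
  have "(1 + y) powr \<beta> \<le> 1 * exp (y / 2)" if "0 \<le> y" for y
  proof -
    have "(1 + y) powr \<beta> \<le> 1 powr \<beta>" using True that by (intro powr_mono2') auto
    also have "\<dots> \<le> exp (y / 2)" using that by simp
    finally show ?thesis by simp
  qed
  then show ?thesis using that[of 1] by auto
next
  case False
  define \<epsilon> where "\<epsilon> = 1 / (2 * \<beta>)"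
  have \<epsilon>: "0 < \<epsilon>" using False by (simp add: \<epsilon>_def)
  have "(1 + y) powr \<beta> \<le> exp (1/2 - \<beta> - \<beta> * ln \<epsilon>) * exp (y / 2)" if y: "0 \<le> y" for y
  proof -
    have "ln \<epsilon> + ln (1 + y) \<le> \<epsilon> * (1 + y) - 1"
      using ln_le_minus_one[of "\<epsilon> * (1 + y)"] \<epsilon> y by (simp add: ln_mult)
    then have "\<beta> * (ln \<epsilon> + ln (1 + y)) \<le> \<beta> * (\<epsilon> * (1 + y) - 1)"
      using False by (intro mult_left_mono) auto
    also have "\<beta> * (\<epsilon> * (1 + y) - 1) = (1 + y) / 2 - \<beta>"
      using False by (simp add: \<epsilon>_def field_simps)
    finally have "\<beta> * ln (1 + y) \<le> y / 2 + (1/2 - \<beta> - \<beta> * ln \<epsilon>)"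
      by (simp add: algebra_simps)
    then show ?thesis using y by (simp add: powr_def flip: exp_add)
  qed
  then show ?thesis using that by (meson exp_gt_zero)
qed

lemma abs_powr_mult_exp_tendsto_zero_at_bot: "((\<lambda>x::real. \<bar>x\<bar> powr \<gamma> * exp x) \<longlongrightarrow> 0) at_bot"
  by real_asymp

lemma tendsto_at_bot_if_uniform_Cauchy:
  fixes f :: "real \<Rightarrow> 'a::banach"
  assumes bound: "\<And>a x. a \<le> A \<Longrightarrow> x \<le> a \<Longrightarrow> norm (f a - f x) \<le> h a"
    and h: "(h \<longlongrightarrow> 0) at_bot"
  shows "\<exists>L. (f \<longlongrightarrow> L) at_bot"
proof -
  have "cauchy_filter (filtermap f at_bot)"
  proof (unfold cauchy_filter_metric_filtermap, intro allI impI)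
    fix e :: real assume "0 < e"
    then obtain B where B: "\<And>a. a \<le> B \<Longrightarrow> norm (h a) < e"
      using h by (auto simp: tendsto_iff dist_norm eventually_at_bot_linorder)
    have "dist (f x) (f y) < e" if "x \<le> min A B" "y \<le> min A B" for x y
      using bound[of x y] bound[of y x] B[of x] B[of y] that
      by (cases "y \<le> x") (auto simp: dist_norm norm_minus_commute)
    then show "\<exists>P. eventually P at_bot \<and> (\<forall>x y. P x \<and> P y \<longrightarrow> dist (f x) (f y) < e)"
      using eventually_le_at_bot[of "min A B"] by blast
  qed
  then obtain L where "filtermap f at_bot \<le> nhds L"
    using cauchy_filter_complete_converges[OF _ complete_UNIV, of "filtermap f at_bot"]
    by (auto simp: filtermap_bot_iff)
  then show ?thesis by (auto simp: filterlim_def)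
qed

lemma norm_diff_le_exp_half:
  fixes f f' :: "real \<Rightarrow> 'a::real_normed_vector"
  assumes "x \<le> a" "0 \<le> B"
    and deriv: "\<And>y. y \<le> a \<Longrightarrow> (f has_vector_derivative f' y) (at y)"
    and bound: "\<And>y. y \<le> a \<Longrightarrow> norm (f' y) \<le> B * exp (y / 2)"
  shows "norm (f a - f x) \<le> 2 * B * exp (a / 2)"
proof (cases "x = a")
  case False
  have exp_deriv: "((\<lambda>y. 2 * B * exp (y / 2)) has_vector_derivative B * exp (y / 2)) (at y)" for y
    by (auto intro!: derivative_eq_intros simp: has_real_derivative_iff_has_vector_derivative[symmetric])
  have "norm (f a - f x) \<le> 2 * B * exp (a / 2) - 2 * B * exp (x / 2)"
  proof (rule differentiable_bound_general[where f' = f'])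
    show "continuous_on {x..a} f"
      using deriv by (intro continuous_at_imp_continuous_on ballI has_vector_derivative_continuous) auto
    show "continuous_on {x..a} (\<lambda>y. 2 * B * exp (y / 2))"
      by (intro continuous_intros) simp
  qed (use False assms exp_deriv in auto)
  also have "\<dots> \<le> 2 * B * exp (a / 2)" using assms by simp
  finally show ?thesis .
qed (use assms in simp)

section \<open>The slit exterior\<close>

lemma Gdom_iff: "z \<in> Gdom R \<longleftrightarrow> R < norm z \<and> (Im z = 0 \<longrightarrow> Re z < 0)"
proof -
  have "z \<in> {complex_of_real x | x. x \<ge> 0} \<longleftrightarrow> Im z = 0 \<and> 0 \<le> Re z"
    by (auto intro!: exI[of _ "Re z"] complex_eqI)
  then show ?thesis unfolding Gdom_def by (auto simp: dist_norm)
qed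

lemma norm_powr_le_horizontal_shift:
  assumes s: "1 \<le> norm (Complex y b)" and w: "1 \<le> norm (Complex a b)" and ya: "y \<le> a"
  shows "norm (Complex y b) powr \<alpha> \<le> (2 * (1 + (a - y))) powr \<bar>\<alpha>\<bar> * norm (Complex a b) powr \<alpha>"
proof -
  define Y where "Y = a - y"
  have "Complex y b - Complex a b = of_real (y - a)" by (simp add: complex_eq_iff)
  then have Y: "0 \<le> Y" "norm (Complex y b - Complex a b) = Y"
    using ya by (simp_all only: Y_def norm_of_real)
  have hi: "norm (Complex y b) \<le> norm (Complex a b) * (2 * (1 + Y))"
    using norm_triangle_ineq2[of "Complex y b" "Complex a b"] Y w mult_left_mono[of 1 "norm (Complex a b)" Y]
    by (simp add: algebra_simps)
  have lo: "norm (Complex a b) / (2 * (1 + Y)) \<le> norm (Complex y b)"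
  proof (cases "Y \<le> norm (Complex a b) / 2")
    case True
    have "norm (Complex a b) / (2 * (1 + Y)) \<le> norm (Complex a b) / 2"
      using Y w by (intro divide_left_mono) auto
    moreover have "norm (Complex a b) - Y \<le> norm (Complex y b)"
      using norm_triangle_ineq2[of "Complex a b" "Complex y b"] Y by (simp add: norm_minus_commute)
    ultimately show ?thesis using True by linarith
  next
    case False
    then have "norm (Complex a b) / (2 * (1 + Y)) \<le> 1" using Y by (simp add: field_simps)
    then show ?thesis using s by linarith
  qed
  have "norm (Complex y b) powr \<alpha> \<le> (2 * (1 + Y)) powr \<bar>\<alpha>\<bar> * norm (Complex a b) powr \<alpha>"
    using w Y by (intro powr_le_within_factor[OF _ lo hi]) auto
  then show ?thesis by (simp add: Y_def)
qed

lemma open_Gdom: "open (Gdom R)"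
proof -
  have "{complex_of_real x | x. x \<ge> 0} = \<real> \<inter> {w. 0 \<le> Re w}"
    by (auto simp: complex_is_Real_iff intro!: exI[of _ "Re _"] complex_eqI)
  then have "closed {complex_of_real x | x. x \<ge> 0}" by (simp add: closed_Real_halfspace_Re_ge)
  then show ?thesis unfolding Gdom_def by (intro open_Diff closed_Un) auto
qed

lemma filterlim_of_real_at_bot_Gdom: "filterlim complex_of_real (at_infinity_in (Gdom R)) at_bot"
proof -
  have "filterlim complex_of_real at_infinity at_bot"
  proof (subst filterlim_at_infinity[OF order_refl], intro allI impI)
    fix r :: real
    show "\<forall>\<^sub>F x in at_bot. r \<le> norm (complex_of_real x)"
      using eventually_le_at_bot[of "- r"] by eventually_elim auto
  qed
  moreover have "\<forall>\<^sub>F x in at_bot. complex_of_real x \<in> Gdom R"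
    using eventually_le_at_bot[of "- \<bar>R\<bar> - 1"] by eventually_elim (auto simp: Gdom_iff)
  ultimately show ?thesis by (simp add: filterlim_inf filterlim_principal)
qed

lemma has_vector_derivative_horizontal_line:
  assumes "(K has_field_derivative D) (at (Complex y b))"
  shows "((\<lambda>y. K (Complex y b)) has_vector_derivative D) (at y)"
proof -
  have eq: "Complex x b = of_real x + \<i> * of_real b" for x by (simp add: complex_eq_iff)
  have "((\<lambda>z. K (z + \<i> * of_real b)) has_field_derivative D) (at (of_real y))"
    using assms by (simp add: DERIV_shift[symmetric] eq)
  from has_vector_derivative_real_field[OF this] show ?thesis by (simp add: eq)
qed

section \<open>Primitives with exponentially decaying derivative\<close>

locale slit_exterior_primitive =
  fixes K \<kappa> :: "complex \<Rightarrow> complex" and R R\<^sub>1 C \<alpha> :: real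
  assumes R\<^sub>1: "1 \<le> R\<^sub>1" "R < R\<^sub>1" and C: "0 \<le> C"
    and deriv: "\<And>s. s \<in> Gdom R \<Longrightarrow> R\<^sub>1 \<le> norm s \<Longrightarrow> (K has_field_derivative \<kappa> s) (at s)"
    and bound: "\<And>s. s \<in> Gdom R \<Longrightarrow> R\<^sub>1 \<le> norm s \<Longrightarrow> norm (\<kappa> s) \<le> C * norm s powr \<alpha> * exp (Re s)"
begin

abbreviation U where "U \<equiv> {s \<in> Gdom R. R\<^sub>1 \<le> norm s}"

lemma in_U: "R\<^sub>1 \<le> norm z \<Longrightarrow> Im z \<noteq> 0 \<or> Re z < 0 \<Longrightarrow> z \<in> U"
  using R\<^sub>1 by (auto simp: Gdom_iff)

lemma one_le_norm_if_in_U: "s \<in> U \<Longrightarrow> 1 \<le> norm s"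
  using R\<^sub>1 by auto

lemma left_half_plane_in_U:
  assumes "x \<le> - R\<^sub>1"
  shows "Complex x b \<in> U"
proof (rule in_U)
  show "R\<^sub>1 \<le> norm (Complex x b)"
    using abs_Re_le_cmod[of "Complex x b"] assms by simp
  show "Im (Complex x b) \<noteq> 0 \<or> Re (Complex x b) < 0"
    using assms R\<^sub>1 by simp
qed

lemma derivative_bound_on_ray:
  assumes C\<^sub>\<beta>: "\<And>y. 0 \<le> y \<Longrightarrow> (1 + y) powr \<bar>\<alpha>\<bar> \<le> C\<^sub>\<beta> * exp (y / 2)"
    and ray: "\<And>y. y \<le> a \<Longrightarrow> Complex y b \<in> U" and y: "y \<le> a"
  shows "norm (\<kappa> (Complex y b))
           \<le> C * 2 powr \<bar>\<alpha>\<bar> * C\<^sub>\<beta> * norm (Complex a b) powr \<alpha> * exp (a / 2) * exp (y / 2)"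
proof -
  have shift: "norm (Complex y b) powr \<alpha> \<le> (2 * (1 + (a - y))) powr \<bar>\<alpha>\<bar> * norm (Complex a b) powr \<alpha>"
    using one_le_norm_if_in_U[OF ray[OF y]] one_le_norm_if_in_U[OF ray[OF order_refl]] y
    by (rule norm_powr_le_horizontal_shift)
  have "(2 * (1 + (a - y))) powr \<bar>\<alpha>\<bar> = 2 powr \<bar>\<alpha>\<bar> * (1 + (a - y)) powr \<bar>\<alpha>\<bar>"
    using y by (subst powr_mult) auto
  also have "\<dots> \<le> 2 powr \<bar>\<alpha>\<bar> * (C\<^sub>\<beta> * exp ((a - y) / 2))"
    using C\<^sub>\<beta>[of "a - y"] y by (intro mult_left_mono) simp_all
  finally have "norm (Complex y b) powr \<alpha> \<le> 2 powr \<bar>\<alpha>\<bar> * (C\<^sub>\<beta> * exp ((a - y) / 2)) * norm (Complex a b) powr \<alpha>"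
    by (rule order_trans[OF shift mult_right_mono]) simp
  then have "C * norm (Complex y b) powr \<alpha> * exp y
      \<le> C * (2 powr \<bar>\<alpha>\<bar> * (C\<^sub>\<beta> * exp ((a - y) / 2)) * norm (Complex a b) powr \<alpha>) * exp y"
    by (rule mult_right_mono[OF mult_left_mono[OF _ C]]) simp_all
  also have "\<dots> = C * 2 powr \<bar>\<alpha>\<bar> * C\<^sub>\<beta> * norm (Complex a b) powr \<alpha> * exp (a / 2) * exp (y / 2)"
  proof -
    have "exp ((a - y) / 2) * exp y = exp (a / 2) * exp (y / 2)"
      by (simp flip: exp_add) (simp add: field_simps)
    then show ?thesis by (simp add: mult_ac)
  qed
  finally show ?thesis
    using bound[of "Complex y b"] ray[OF y] by simp
qed

lemma horizontal_increment:
  obtains M where "0 \<le> M"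
    "\<And>a b x. (\<And>y. y \<le> a \<Longrightarrow> Complex y b \<in> U) \<Longrightarrow> x \<le> a \<Longrightarrow>
       norm (K (Complex a b) - K (Complex x b)) \<le> M * norm (Complex a b) powr \<alpha> * exp a"
proof -
  \<comment> \<open>The polynomial factor along the ray costs only half of the exponential decay.\<close>
  obtain C\<^sub>\<beta> where C\<^sub>\<beta>: "0 < C\<^sub>\<beta>" "\<And>y. 0 \<le> y \<Longrightarrow> (1 + y) powr \<bar>\<alpha>\<bar> \<le> C\<^sub>\<beta> * exp (y / 2)"
    using powr_le_const_mult_exp_half[of "\<bar>\<alpha>\<bar>"] by blast
  define M where "M = 2 * C * 2 powr \<bar>\<alpha>\<bar> * C\<^sub>\<beta>"
  have M: "0 \<le> M" using C C\<^sub>\<beta> by (simp add: M_def)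
  have incr: "norm (K (Complex a b) - K (Complex x b)) \<le> M * norm (Complex a b) powr \<alpha> * exp a"
    if ray: "\<And>y. y \<le> a \<Longrightarrow> Complex y b \<in> U" and xa: "x \<le> a" for a b x
  proof -
    define B where "B = C * 2 powr \<bar>\<alpha>\<bar> * C\<^sub>\<beta> * norm (Complex a b) powr \<alpha> * exp (a / 2)"
    have "norm (K (Complex a b) - K (Complex x b)) \<le> 2 * B * exp (a / 2)"
    proof (rule norm_diff_le_exp_half[OF xa])
      show "0 \<le> B" using C C\<^sub>\<beta> by (simp add: B_def)
      show "((\<lambda>y. K (Complex y b)) has_vector_derivative \<kappa> (Complex y b)) (at y)" if "y \<le> a" for y
        using ray[OF that] by (intro has_vector_derivative_horizontal_line deriv) auto
      show "norm (\<kappa> (Complex y b)) \<le> B * exp (y / 2)" if "y \<le> a" for y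
        unfolding B_def by (rule derivative_bound_on_ray[OF C\<^sub>\<beta>(2) ray that])
    qed
    also have "\<dots> = M * norm (Complex a b) powr \<alpha> * exp a"
      by (simp add: B_def M_def flip: exp_add)
    finally show ?thesis .
  qed
  show thesis by (rule that[OF M incr])
qed

lemma vertical_increment:
  assumes seg: "closed_segment (Complex a b\<^sub>1) (Complex a b\<^sub>2) \<subseteq> U"
    and powr_le: "\<And>z. z \<in> closed_segment (Complex a b\<^sub>1) (Complex a b\<^sub>2) \<Longrightarrow> norm z powr \<alpha> \<le> B"
  shows "norm (K (Complex a b\<^sub>2) - K (Complex a b\<^sub>1)) \<le> C * B * exp a * \<bar>b\<^sub>2 - b\<^sub>1\<bar>"
proof -
  have "norm (K (Complex a b\<^sub>2) - K (Complex a b\<^sub>1)) \<le> C * B * exp a * norm (Complex a b\<^sub>2 - Complex a b\<^sub>1)"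
  proof (rule field_differentiable_bound[of "closed_segment (Complex a b\<^sub>1) (Complex a b\<^sub>2)"])
    fix z assume z: "z \<in> closed_segment (Complex a b\<^sub>1) (Complex a b\<^sub>2)"
    show "(K has_field_derivative \<kappa> z) (at z within closed_segment (Complex a b\<^sub>1) (Complex a b\<^sub>2))"
      using seg z by (intro has_field_derivative_at_within[OF deriv]) auto
    have "Re z = a" using z by (simp add: closed_segment_same_Re)
    have "norm (\<kappa> z) \<le> C * norm z powr \<alpha> * exp (Re z)"
      using seg z by (intro bound) auto
    also have "\<dots> \<le> C * B * exp a"
      using mult_right_mono[OF mult_left_mono[OF powr_le[OF z] C], of "exp a"] \<open>Re z = a\<close> by simp
    finally show "norm (\<kappa> z) \<le> C * B * exp a" .
  qed auto
  moreover have "norm (Complex a b\<^sub>2 - Complex a b\<^sub>1) = \<bar>b\<^sub>2 - b\<^sub>1\<bar>"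
    by (simp add: cmod_def)
  ultimately show ?thesis by simp
qed

lemma tendsto_real_axis: "\<exists>L. ((\<lambda>x. K (Complex x 0)) \<longlongrightarrow> L) at_bot"
proof -
  obtain M where "0 \<le> M" and M: "\<And>a b x. (\<And>y. y \<le> a \<Longrightarrow> Complex y b \<in> U) \<Longrightarrow> x \<le> a \<Longrightarrow>
      norm (K (Complex a b) - K (Complex x b)) \<le> M * norm (Complex a b) powr \<alpha> * exp a"
    by (erule horizontal_increment)
  show ?thesis
  proof (rule tendsto_at_bot_if_uniform_Cauchy[where A = "- R\<^sub>1"])
    show "norm (K (Complex a 0) - K (Complex x 0)) \<le> M * (\<bar>a\<bar> powr \<alpha> * exp a)"
      if "a \<le> - R\<^sub>1" "x \<le> a" for a x
      using M[of a 0 x] left_half_plane_in_U that by (simp add: cmod_def mult.assoc)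
    show "((\<lambda>a. M * (\<bar>a\<bar> powr \<alpha> * exp a)) \<longlongrightarrow> 0) at_bot"
      by (intro tendsto_mult_right_zero abs_powr_mult_exp_tendsto_zero_at_bot)
  qed
qed

lemma tendsto_horizontal_line:
  assumes L: "((\<lambda>x. K (Complex x 0)) \<longlongrightarrow> L) at_bot"
  shows "((\<lambda>x. K (Complex x b)) \<longlongrightarrow> L) at_bot"
proof -
  define B where "B = C * (1 + \<bar>b\<bar>) powr \<bar>\<alpha>\<bar> * \<bar>b\<bar>"
  have "norm (K (Complex x b) - K (Complex x 0)) \<le> B * (\<bar>x\<bar> powr \<alpha> * exp x)" if x: "x \<le> - R\<^sub>1" for x
  proof -
    have "norm (K (Complex x b) - K (Complex x 0)) \<le> C * ((1 + \<bar>b\<bar>) powr \<bar>\<alpha>\<bar> * \<bar>x\<bar> powr \<alpha>) * exp x * \<bar>b - 0\<bar>"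
    proof (rule vertical_increment)
      show "closed_segment (Complex x 0) (Complex x b) \<subseteq> U"
      proof
        fix z assume "z \<in> closed_segment (Complex x 0) (Complex x b)"
        then have "z = Complex x (Im z)" by (simp add: closed_segment_same_Re complex_eq_iff)
        with left_half_plane_in_U[OF x] show "z \<in> U" by metis
      qed
      fix z assume "z \<in> closed_segment (Complex x 0) (Complex x b)"
      then have z: "Re z = x" "\<bar>Im z\<bar> \<le> \<bar>b\<bar>"
        by (auto simp: closed_segment_same_Re closed_segment_eq_real_ivl split: if_splits)
      have "\<bar>x\<bar> \<le> norm z" using abs_Re_le_cmod[of z] z by simp
      moreover have "norm z \<le> \<bar>x\<bar> + \<bar>b\<bar>" using cmod_le[of z] z by simp
      moreover have "\<bar>x\<bar> + \<bar>b\<bar> \<le> \<bar>x\<bar> * (1 + \<bar>b\<bar>)" "\<bar>x\<bar> / (1 + \<bar>b\<bar>) \<le> \<bar>x\<bar>"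
        using x R\<^sub>1 mult_left_mono[of 1 "\<bar>x\<bar>" "\<bar>b\<bar>"] by (auto simp: field_simps)
      ultimately show "norm z powr \<alpha> \<le> (1 + \<bar>b\<bar>) powr \<bar>\<alpha>\<bar> * \<bar>x\<bar> powr \<alpha>"
        using x R\<^sub>1 by (intro powr_le_within_factor) auto
    qed
    then show ?thesis by (simp add: B_def algebra_simps)
  qed
  then have "((\<lambda>x. K (Complex x b) - K (Complex x 0)) \<longlongrightarrow> 0) at_bot"
    by (intro Lim_null_comparison[OF _ tendsto_mult_right_zero[OF abs_powr_mult_exp_tendsto_zero_at_bot]])
      (auto simp: eventually_at_bot_linorder)
  from tendsto_add[OF this L] show ?thesis by simp
qed

lemma ray_bound:
  assumes L: "((\<lambda>x. K (Complex x 0)) \<longlongrightarrow> L) at_bot"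
  obtains M where "0 \<le> M"
    "\<And>a b. (\<And>y. y \<le> a \<Longrightarrow> Complex y b \<in> U) \<Longrightarrow>
       norm (K (Complex a b) - L) \<le> M * norm (Complex a b) powr \<alpha> * exp a"
proof -
  obtain M where "0 \<le> M" and M: "\<And>a b x. (\<And>y. y \<le> a \<Longrightarrow> Complex y b \<in> U) \<Longrightarrow> x \<le> a \<Longrightarrow>
      norm (K (Complex a b) - K (Complex x b)) \<le> M * norm (Complex a b) powr \<alpha> * exp a"
    by (erule horizontal_increment)
  have bound: "norm (K (Complex a b) - L) \<le> M * norm (Complex a b) powr \<alpha> * exp a"
    if ray: "\<And>y. y \<le> a \<Longrightarrow> Complex y b \<in> U" for a b
  proof (rule Lim_norm_ubound[of at_bot "\<lambda>x. K (Complex a b) - K (Complex x b)"])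
    show "((\<lambda>x. K (Complex a b) - K (Complex x b)) \<longlongrightarrow> K (Complex a b) - L) at_bot"
      by (intro tendsto_diff tendsto_const tendsto_horizontal_line[OF L])
    show "\<forall>\<^sub>F x in at_bot. norm (K (Complex a b) - K (Complex x b)) \<le> M * norm (Complex a b) powr \<alpha> * exp a"
      using eventually_le_at_bot[of a] by eventually_elim (rule M[OF ray])
  qed simp
  show thesis by (rule that[OF \<open>0 \<le> M\<close> bound])
qed

lemma left_ray_in_U:
  assumes "R\<^sub>1 \<le> norm w" "Re w < 0 \<or> R\<^sub>1 \<le> \<bar>Im w\<bar>" "y \<le> Re w"
  shows "Complex y (Im w) \<in> U"
proof (rule in_U)
  have "norm w \<le> norm (Complex y (Im w))" if "Re w < 0"
    using that assms(3) by (simp add: cmod_def abs_le_square_iff[symmetric])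
  then show "R\<^sub>1 \<le> norm (Complex y (Im w))"
    using assms abs_Im_le_cmod[of "Complex y (Im w)"] by force
  show "Im (Complex y (Im w)) \<noteq> 0 \<or> Re (Complex y (Im w)) < 0"
    using assms R\<^sub>1 by auto
qed

lemma near_slit_segment:
  assumes w: "w \<in> Gdom R" "3 * R\<^sub>1 \<le> norm w" "0 \<le> Re w" "\<bar>Im w\<bar> < R\<^sub>1"
    and z: "z \<in> closed_segment (Complex (Re w) (sgn (Im w) * R\<^sub>1)) w"
  shows "Re w \<le> norm z" "norm z \<le> Re w + R\<^sub>1" "z \<in> U"
proof -
  have "Im w \<noteq> 0" using w by (auto simp: Gdom_iff)
  have z': "Re z = Re w" "Im z \<in> closed_segment (sgn (Im w) * R\<^sub>1) (Im w)"
    using z by (simp_all add: closed_segment_same_Re)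
  then have "Im z \<noteq> 0" "\<bar>Im z\<bar> \<le> R\<^sub>1"
    using \<open>Im w \<noteq> 0\<close> w R\<^sub>1 by (auto simp: closed_segment_eq_real_ivl sgn_if split: if_splits)
  show "Re w \<le> norm z" using abs_Re_le_cmod[of z] z' by simp
  show "norm z \<le> Re w + R\<^sub>1" using cmod_le[of z] z' w \<open>\<bar>Im z\<bar> \<le> R\<^sub>1\<close> by simp
  show "z \<in> U"
    using \<open>Re w \<le> norm z\<close> cmod_le[of w] \<open>Im z \<noteq> 0\<close> w by (intro in_U) auto
qed

text \<open>Near the positive real axis the horizontal ray to the left would cross the slit, so one first
  moves vertically to height \<open>\<plusminus>R\<^sub>1\<close>.\<close>
lemma near_slit_bound:
  assumes "0 \<le> M"
    and ray: "\<And>a b. (\<And>y. y \<le> a \<Longrightarrow> Complex y b \<in> U) \<Longrightarrow>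
       norm (K (Complex a b) - L) \<le> M * norm (Complex a b) powr \<alpha> * exp a"
    and w: "w \<in> Gdom R" "3 * R\<^sub>1 \<le> norm w" "0 \<le> Re w" "\<bar>Im w\<bar> < R\<^sub>1"
  shows "norm (K w - L) \<le> (C * R\<^sub>1 + M) * 2 powr \<bar>\<alpha>\<bar> * norm w powr \<alpha> * exp (Re w)"
proof -
  define a b where "a = Re w" and "b = Im w"
  define b' where "b' = sgn b * R\<^sub>1"
  have w_eq: "w = Complex a b" by (simp add: a_def b_def)
  have b: "b \<noteq> 0" using w by (auto simp: Gdom_iff a_def b_def)
  have seg: "a \<le> norm z" "norm z \<le> a + R\<^sub>1" "z \<in> U"
    if "z \<in> closed_segment (Complex a b') (Complex a b)" for z
    using near_slit_segment[OF w, of z] that by (simp_all add: a_def b_def b'_def)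
  have a: "norm w / 2 \<le> a" "a \<le> norm w"
    using cmod_le[of w] abs_Re_le_cmod[of w] w by (auto simp: a_def b_def)
  have powr_le: "norm z powr \<alpha> \<le> 2 powr \<bar>\<alpha>\<bar> * norm w powr \<alpha>"
    if "a \<le> norm z" "norm z \<le> a + R\<^sub>1" for z :: complex
    using that a w R\<^sub>1 by (intro powr_le_within_factor) auto
  have "norm (K (Complex a b) - K (Complex a b')) \<le> C * (2 powr \<bar>\<alpha>\<bar> * norm w powr \<alpha>) * exp a * \<bar>b - b'\<bar>"
    using seg powr_le by (intro vertical_increment) auto
  also have "\<dots> \<le> C * (2 powr \<bar>\<alpha>\<bar> * norm w powr \<alpha>) * exp a * R\<^sub>1"
    using b w C by (intro mult_left_mono) (auto simp: b'_def b_def sgn_if)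
  finally have vertical: "norm (K w - K (Complex a b')) \<le> C * R\<^sub>1 * 2 powr \<bar>\<alpha>\<bar> * norm w powr \<alpha> * exp a"
    by (simp add: w_eq algebra_simps)
  have "R\<^sub>1 \<le> \<bar>Im (Complex a b')\<bar>" using b R\<^sub>1 by (simp add: b'_def abs_mult)
  then have "Complex y b' \<in> U" if "y \<le> a" for y
    using left_ray_in_U[of "Complex a b'" y] abs_Im_le_cmod[of "Complex a b'"] that by simp
  then have "norm (K (Complex a b') - L) \<le> M * norm (Complex a b') powr \<alpha> * exp a"
    by (rule ray)
  also have "\<dots> \<le> M * (2 powr \<bar>\<alpha>\<bar> * norm w powr \<alpha>) * exp a"
    using seg[of "Complex a b'"] \<open>0 \<le> M\<close>
    by (intro mult_right_mono[OF mult_left_mono[OF powr_le]]) auto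
  finally have horizontal: "norm (K (Complex a b') - L) \<le> M * 2 powr \<bar>\<alpha>\<bar> * norm w powr \<alpha> * exp a"
    by (simp add: algebra_simps)
  have "norm (K w - L) \<le> norm (K w - K (Complex a b')) + norm (K (Complex a b') - L)"
    using norm_triangle_ineq[of "K w - K (Complex a b')" "K (Complex a b') - L"] by simp
  also have "\<dots> \<le> (C * R\<^sub>1 + M) * 2 powr \<bar>\<alpha>\<bar> * norm w powr \<alpha> * exp a"
    using vertical horizontal by (simp add: algebra_simps)
  finally show ?thesis by (simp add: a_def)
qed

lemma exterior_bound:
  assumes L: "((\<lambda>x. K (Complex x 0)) \<longlongrightarrow> L) at_bot"
  obtains M where "\<And>w. w \<in> Gdom R \<Longrightarrow> 3 * R\<^sub>1 \<le> norm w \<Longrightarrow>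
    norm (K w - L) \<le> M * norm w powr \<alpha> * exp (Re w)"
proof -
  obtain M where M: "0 \<le> M" "\<And>a b. (\<And>y. y \<le> a \<Longrightarrow> Complex y b \<in> U) \<Longrightarrow>
       norm (K (Complex a b) - L) \<le> M * norm (Complex a b) powr \<alpha> * exp a"
    by (erule ray_bound[OF L])
  define M' where "M' = (C * R\<^sub>1 + M) * 2 powr \<bar>\<alpha>\<bar>"
  have "1 \<le> 2 powr \<bar>\<alpha>\<bar>" by (simp add: ge_one_powr_ge_zero)
  moreover have "0 \<le> C * R\<^sub>1" using C R\<^sub>1 by simp
  ultimately have "M \<le> M'"
    using M(1) mult_left_mono[of 1 "2 powr \<bar>\<alpha>\<bar>" "C * R\<^sub>1 + M"] by (simp add: M'_def)
  have bound: "norm (K w - L) \<le> M' * norm w powr \<alpha> * exp (Re w)"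
    if w: "w \<in> Gdom R" "3 * R\<^sub>1 \<le> norm w" for w
  proof (cases "Re w < 0 \<or> R\<^sub>1 \<le> \<bar>Im w\<bar>")
    case True
    then have "norm (K w - L) \<le> M * norm w powr \<alpha> * exp (Re w)"
      using M(2)[of "Re w" "Im w"] left_ray_in_U[of w] w R\<^sub>1 by simp
    also have "\<dots> \<le> M' * norm w powr \<alpha> * exp (Re w)"
      using \<open>M \<le> M'\<close> by (intro mult_right_mono) auto
    finally show ?thesis .
  next
    case False
    then show ?thesis
      using near_slit_bound[OF M w] by (simp add: M'_def)
  qed
  show thesis by (rule that[OF bound])
qed

end

lemma slit_exterior_limit:
  fixes K \<kappa> :: "complex \<Rightarrow> complex"
  assumes deriv: "\<forall>\<^sub>F s in at_infinity_in (Gdom R). (K has_field_derivative \<kappa> s) (at s)"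
    and bound: "\<kappa> \<in> O[at_infinity_in (Gdom R)](\<lambda>s. of_real (norm s powr \<alpha> * exp (Re s)))"
  obtains L where "((\<lambda>x. K (of_real x)) \<longlongrightarrow> L) at_bot"
    "(\<lambda>w. K w - L) \<in> O[at_infinity_in (Gdom R)](\<lambda>w. of_real (norm w powr \<alpha> * exp (Re w)))"
proof -
  obtain C where C: "0 < C"
    and ev: "\<forall>\<^sub>F s in at_infinity_in (Gdom R). norm (\<kappa> s) \<le> C * norm (complex_of_real (norm s powr \<alpha> * exp (Re s)))"
    using bound by (elim landau_o.bigE)
  from deriv ev have "\<forall>\<^sub>F s in at_infinity_in (Gdom R).
      (K has_field_derivative \<kappa> s) (at s) \<and> norm (\<kappa> s) \<le> C * norm s powr \<alpha> * exp (Re s)"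
    by eventually_elim (simp add: mult.assoc norm_mult)
  then obtain B where B: "\<And>s. s \<in> Gdom R \<Longrightarrow> B \<le> norm s \<Longrightarrow>
      (K has_field_derivative \<kappa> s) (at s) \<and> norm (\<kappa> s) \<le> C * norm s powr \<alpha> * exp (Re s)"
    by (auto simp: eventually_at_infinity_in)
  define R\<^sub>1 where "R\<^sub>1 = max (max 1 (R + 1)) B"
  interpret slit_exterior_primitive K \<kappa> R R\<^sub>1 C \<alpha>
    by unfold_locales (use B C in \<open>auto simp: R\<^sub>1_def\<close>)
  obtain L where L: "((\<lambda>x. K (Complex x 0)) \<longlongrightarrow> L) at_bot"
    using tendsto_real_axis by blast
  obtain M where M: "\<And>w. w \<in> Gdom R \<Longrightarrow> 3 * R\<^sub>1 \<le> norm w \<Longrightarrow>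
      norm (K w - L) \<le> M * norm w powr \<alpha> * exp (Re w)"
    by (erule exterior_bound[OF L])
  show thesis
  proof (rule that)
    have "Complex x 0 = of_real x" for x by (simp add: complex_eq_iff)
    then show "((\<lambda>x. K (of_real x)) \<longlongrightarrow> L) at_bot" using L by simp
    have "\<forall>\<^sub>F w in at_infinity_in (Gdom R).
        norm (K w - L) \<le> M * norm (complex_of_real (norm w powr \<alpha> * exp (Re w)))"
      unfolding eventually_at_infinity_in using M by (auto simp: mult.assoc norm_mult)
    then show "(\<lambda>w. K w - L) \<in> O[at_infinity_in (Gdom R)](\<lambda>w. of_real (norm w powr \<alpha> * exp (Re w)))"
      by (rule bigoI)
  qed
qed

section \<open>Asymptotics of the Newton map\<close>

text \<open>The Newton step \<open>z - g / (p e\<^sup>w)\<close> at \<open>z = \<phi> w\<close>, regrouped along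
  \<open>g = (g - r e\<^sup>w - c\<^sub>S) + r e\<^sup>w + c\<^sub>S\<close> with \<open>r = p / q' - A\<^sub>1 / q'\<^sup>3\<close>.\<close>
lemma newton_step_expansion:
  fixes t G L P Q A e w lam :: complex
  assumes "P \<noteq> 0" "Q \<noteq> 0" "e \<noteq> 0" "w \<noteq> 0"
  shows "t - G / (P * e)
    = t - (1 / Q) * (1 + lam / w + ((G - (P / Q - A / Q ^ 3) * e - L) * (1 / e) * (Q / P)
                                     - (A / (P * Q ^ 2) + lam / w)))
        - L * (1 / e) / P"
  using assms by (simp add: field_simps power2_eq_square power3_eq_cube)

locale newton_exterior =
  fixes p q :: "complex poly" and R :: real and \<phi> :: "complex \<Rightarrow> complex"
  assumes p_nonzero: "p \<noteq> 0" and degree_q: "1 \<le> degree q"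
    and critical_values: "\<And>z. poly (pderiv q) z = 0 \<Longrightarrow> norm (poly q z) < R"
    and \<phi>_holomorphic: "\<phi> holomorphic_on Gdom R"
    and q_\<phi>: "\<And>w. w \<in> Gdom R \<Longrightarrow> poly q (\<phi> w) = w"
begin

lemma pderiv_q_\<phi>_nonzero: "w \<in> Gdom R \<Longrightarrow> poly (pderiv q) (\<phi> w) \<noteq> 0"
  using critical_values[of "\<phi> w"] q_\<phi>[of w] by (auto simp: Gdom_iff)

lemma has_field_derivative_\<phi>:
  assumes w: "w \<in> Gdom R"
  shows "(\<phi> has_field_derivative 1 / poly (pderiv q) (\<phi> w)) (at w)"
proof -
  have d\<phi>: "(\<phi> has_field_derivative deriv \<phi> w) (at w)"
    using \<phi>_holomorphic open_Gdom w by (intro holomorphic_derivI) auto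
  have "((poly q \<circ> \<phi>) has_field_derivative poly (pderiv q) (\<phi> w) * deriv \<phi> w) (at w)"
    by (rule DERIV_chain[OF poly_DERIV d\<phi>])
  then have "((\<lambda>x. x) has_field_derivative poly (pderiv q) (\<phi> w) * deriv \<phi> w) (at w)"
    by (rule has_field_derivative_transform_within_open[OF _ open_Gdom w]) (simp add: q_\<phi>)
  then have "poly (pderiv q) (\<phi> w) * deriv \<phi> w = 1"
    using DERIV_ident DERIV_unique by blast
  then have "deriv \<phi> w = 1 / poly (pderiv q) (\<phi> w)"
    using pderiv_q_\<phi>_nonzero[OF w] by (simp add: field_simps)
  then show ?thesis using d\<phi> by simp
qed

lemma filterlim_\<phi>: "filterlim \<phi> at_infinity (at_infinity_in (Gdom R))"
proof (subst filterlim_at_infinity[OF order_refl], intro allI impI)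
  fix r :: real
  have "compact (poly q ` cball 0 r)"
    by (intro compact_continuous_image continuous_intros) auto
  then obtain B where B: "\<forall>t\<in>cball 0 r. norm (poly q t) \<le> B"
    by (auto dest!: compact_imp_bounded simp: bounded_iff)
  have "r \<le> norm (\<phi> w)" if "w \<in> Gdom R" "B + 1 \<le> norm w" for w
  proof (rule ccontr)
    assume "\<not> r \<le> norm (\<phi> w)"
    then have "\<phi> w \<in> cball 0 r" by simp
    then have "norm w \<le> B" using bspec[OF B] q_\<phi>[OF that(1)] by metis
    then show False using that(2) by simp
  qed
  then show "\<forall>\<^sub>F w in at_infinity_in (Gdom R). r \<le> norm (\<phi> w)"
    unfolding eventually_at_infinity_in by blast
qed

lemma norm_\<phi>_powr_bigtheta:
  "(\<lambda>w. of_real (norm (\<phi> w) powr e))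
     \<in> \<Theta>[at_infinity_in (Gdom R)](\<lambda>w. of_real (norm w powr (e / real (degree q))))"
proof -
  let ?F = "at_infinity_in (Gdom R)" and ?d = "real (degree q)"
  have "(\<lambda>w. w) \<in> \<Theta>[?F](\<lambda>w. poly q (\<phi> w))"
    by (rule bigthetaI_cong) (auto simp: eventually_inf_principal q_\<phi>)
  also have "(\<lambda>w. poly q (\<phi> w)) \<in> \<Theta>[?F](\<lambda>w. of_real (norm (\<phi> w) powr ?d))"
    using degree_q by (intro landau_theta.compose[OF poly_bigtheta_powr filterlim_\<phi>]) auto
  finally have "(\<lambda>w. norm w) \<in> \<Theta>[?F](\<lambda>w. norm (\<phi> w) powr ?d)"
    by (subst (asm) landau_theta.norm_iff[symmetric]) simp
  then have "(\<lambda>w. \<bar>norm w\<bar> powr (e / ?d)) \<in> \<Theta>[?F](\<lambda>w. \<bar>norm (\<phi> w) powr ?d\<bar> powr (e / ?d))"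
    by (rule bigtheta_powr)
  then have "(\<lambda>w. norm w powr (e / ?d)) \<in> \<Theta>[?F](\<lambda>w. norm (\<phi> w) powr e)"
    using degree_q by (simp add: powr_powr)
  then show ?thesis
    by (subst bigtheta_sym) (simp only: landau_theta.of_real_iff)
qed

lemma bigo_compose_\<phi>:
  assumes "f \<in> O[at_infinity](\<lambda>t. of_real (norm t powr e))"
  shows "(\<lambda>w. f (\<phi> w)) \<in> O[at_infinity_in (Gdom R)](\<lambda>w. of_real (norm w powr (e / real (degree q))))"
  using landau_o.big_trans[OF landau_o.big.compose[OF assms filterlim_\<phi>] bigthetaD1[OF norm_\<phi>_powr_bigtheta]] .

lemma bigtheta_compose_\<phi>:
  assumes "f \<in> \<Theta>[at_infinity](\<lambda>t. of_real (norm t powr e))"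
  shows "(\<lambda>w. f (\<phi> w)) \<in> \<Theta>[at_infinity_in (Gdom R)](\<lambda>w. of_real (norm w powr (e / real (degree q))))"
  using landau_theta.trans[OF landau_theta.compose[OF assms filterlim_\<phi>] norm_\<phi>_powr_bigtheta] .

lemma poly_quotient_\<phi>_bigo:
  assumes "poly_deg_le P e" "Q \<noteq> 0" "e - real (degree Q) \<le> a * real (degree q)"
  shows "(\<lambda>w. poly P (\<phi> w) / poly Q (\<phi> w)) \<in> O[at_infinity_in (Gdom R)](\<lambda>w. of_real (norm w powr a))"
proof -
  have "(e - real (degree Q)) / real (degree q) \<le> a"
    using assms(3) degree_q by (simp add: divide_le_eq)
  with bigo_compose_\<phi>[OF poly_quotient_bigo[OF assms(1,2)]] show ?thesis
    by (blast intro: landau_o.big_trans powr_bigo_powr_at_infinity_in)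
qed

lemma poly_quotient_\<phi>_bigtheta:
  assumes "P \<noteq> 0" "Q \<noteq> 0" "real (degree P) - real (degree Q) = a * real (degree q)"
  shows "(\<lambda>w. poly P (\<phi> w) / poly Q (\<phi> w)) \<in> \<Theta>[at_infinity_in (Gdom R)](\<lambda>w. of_real (norm w powr a))"
proof -
  have "(real (degree P) - real (degree Q)) / real (degree q) = a"
    using assms(3) degree_q by simp
  with bigtheta_compose_\<phi>[OF poly_quotient_bigtheta[OF assms(1,2)]] show ?thesis by simp
qed

lemma eventually_poly_p_\<phi>_nonzero: "\<forall>\<^sub>F w in at_infinity_in (Gdom R). poly p (\<phi> w) \<noteq> 0"
proof -
  have "(\<lambda>w. poly p (\<phi> w) / poly 1 (\<phi> w))
      \<in> \<Theta>[at_infinity_in (Gdom R)](\<lambda>w. of_real (norm w powr (real (degree p) / real (degree q))))"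
    using degree_q by (intro poly_quotient_\<phi>_bigtheta p_nonzero) auto
  moreover have "\<forall>\<^sub>F w in at_infinity_in (Gdom R).
      (of_real (norm w powr (real (degree p) / real (degree q))) :: complex) \<noteq> 0"
    unfolding eventually_at_infinity_in by (intro exI[of _ 1]) auto
  ultimately show ?thesis by (simp add: eventually_nonzero_bigtheta)
qed

lemma poly_deg_le_quot_deriv_num_p:
  "poly_deg_le (quot_deriv_num q 1 p) (real (degree p) + real (degree q) - 2)"
  by (intro poly_deg_le_quot_deriv_num poly_deg_le_degree)

lemma pderiv_q_power_nonzero: "pderiv q ^ k \<noteq> 0"
  using degree_q by (simp add: pderiv_eq_0_iff)

lemma degree_pderiv_q_power: "real (degree (pderiv q ^ k)) = real k * (real (degree q) - 1)"
  using degree_q by (simp add: pderiv_eq_0_iff degree_power_eq degree_pderiv)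

lemma ibp_remainder_\<phi>_bigo:
  "(\<lambda>w. poly (quot_deriv_num q 3 (quot_deriv_num q 1 p)) (\<phi> w) / poly (pderiv q) (\<phi> w) ^ 5 * exp w)
     \<in> O[at_infinity_in (Gdom R)](\<lambda>w. of_real (norm w powr ((real (degree p) + 1 - 3 * real (degree q)) / real (degree q)) * exp (Re w)))"
proof -
  have "(\<lambda>w. poly (quot_deriv_num q 3 (quot_deriv_num q 1 p)) (\<phi> w) / poly (pderiv q ^ 5) (\<phi> w))
      \<in> O[at_infinity_in (Gdom R)](\<lambda>w. of_real (norm w powr ((real (degree p) + 1 - 3 * real (degree q)) / real (degree q))))"
    by (rule poly_quotient_\<phi>_bigo[OF poly_deg_le_quot_deriv_num[OF poly_deg_le_quot_deriv_num_p]
          pderiv_q_power_nonzero])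
      (use degree_q in \<open>simp add: degree_pderiv_q_power field_simps\<close>)
  from bigo_mult_exp[OF this, where h = "\<lambda>w. w"] show ?thesis by simp
qed

lemma ibp_approx_\<phi>_bigo:
  "(\<lambda>w. ibp_approx p q (\<phi> w))
     \<in> O[at_infinity_in (Gdom R)](\<lambda>w. of_real (norm w powr ((real (degree p) + 1 - real (degree q)) / real (degree q))))"
proof -
  let ?e = "(real (degree p) + 1 - real (degree q)) / real (degree q)"
  have "(\<lambda>w. poly p (\<phi> w) / poly (pderiv q) (\<phi> w))
      \<in> O[at_infinity_in (Gdom R)](\<lambda>w. of_real (norm w powr ?e))"
    by (rule poly_quotient_\<phi>_bigo[OF poly_deg_le_degree pderiv_q_power_nonzero[of 1, simplified]])
      (use degree_q in \<open>simp add: degree_pderiv field_simps\<close>)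
  moreover have "(\<lambda>w. poly (quot_deriv_num q 1 p) (\<phi> w) / poly (pderiv q ^ 3) (\<phi> w))
      \<in> O[at_infinity_in (Gdom R)](\<lambda>w. of_real (norm w powr ?e))"
    by (rule poly_quotient_\<phi>_bigo[OF poly_deg_le_quot_deriv_num_p pderiv_q_power_nonzero])
      (use degree_q in \<open>simp add: degree_pderiv_q_power field_simps\<close>)
  ultimately show ?thesis
    unfolding ibp_approx_def by (auto dest: sum_in_bigo(2))
qed

lemma correction_\<phi>_bigo:
  "(\<lambda>w. poly (quot_deriv_num q 1 p) (\<phi> w) / (poly p (\<phi> w) * poly (pderiv q) (\<phi> w) ^ 2)
          + of_real ((real (degree q) - 1 - real (degree p)) / real (degree q)) / w)
     \<in> O[at_infinity_in (Gdom R)](\<lambda>w. of_real (norm w powr (- 1 - 1 / real (degree q))))"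
proof -
  let ?D = "smult (of_nat (degree q)) (p * pderiv q ^ 2 * q)"
  have q: "q \<noteq> 0" "pderiv q \<noteq> 0" using degree_q by (auto simp: pderiv_eq_0_iff)
  then have D: "?D \<noteq> 0" "real (degree ?D) = real (degree p) + 2 * (real (degree q) - 1) + real (degree q)"
    using p_nonzero degree_q by (simp_all add: degree_mult_eq degree_power_eq degree_pderiv)
  have "(\<lambda>w. poly (correction_num p q) (\<phi> w) / poly ?D (\<phi> w))
      \<in> O[at_infinity_in (Gdom R)](\<lambda>w. of_real (norm w powr (- 1 - 1 / real (degree q))))"
    by (rule poly_quotient_\<phi>_bigo[OF poly_deg_le_correction_num[OF degree_q] D(1)])
      (use degree_q in \<open>unfold D(2), simp add: field_simps\<close>)
  moreover have "\<forall>\<^sub>F w in at_infinity_in (Gdom R).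
      poly (correction_num p q) (\<phi> w) / poly ?D (\<phi> w)
      = poly (quot_deriv_num q 1 p) (\<phi> w) / (poly p (\<phi> w) * poly (pderiv q) (\<phi> w) ^ 2)
          + of_real ((real (degree q) - 1 - real (degree p)) / real (degree q)) / w"
    using eventually_poly_p_\<phi>_nonzero eventually_mem_at_infinity_in eventually_norm_ge_at_infinity_in[where B = 1]
  proof eventually_elim
    case (elim w)
    then have "w \<noteq> 0" by auto
    with elim show ?case
      using correction_num_quotient[where t = "\<phi> w" and p = p and q = q] pderiv_q_\<phi>_nonzero q_\<phi> degree_q by auto
  qed
  ultimately show ?thesis by (rule landau_o.big.in_cong[THEN iffD1, rotated])
qed

lemma has_field_derivative_ibp_remainder:
  assumes w: "w \<in> Gdom R"
  shows "((\<lambda>w. gfun p q c (\<phi> w) - ibp_approx p q (\<phi> w) * exp (poly q (\<phi> w))) has_field_derivative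
           poly (quot_deriv_num q 3 (quot_deriv_num q 1 p)) (\<phi> w) / poly (pderiv q) (\<phi> w) ^ 5 * exp w) (at w)"
proof -
  have "((\<lambda>w. gfun p q c (\<phi> w) - ibp_approx p q (\<phi> w) * exp (poly q (\<phi> w))) has_field_derivative
      poly (quot_deriv_num q 3 (quot_deriv_num q 1 p)) (\<phi> w) / poly (pderiv q) (\<phi> w) ^ 4
        * exp (poly q (\<phi> w)) * (1 / poly (pderiv q) (\<phi> w))) (at w)"
    by (rule DERIV_chain2[OF has_field_derivative_gfun_minus_ibp_approx has_field_derivative_\<phi>])
      (use w pderiv_q_\<phi>_nonzero in auto)
  then show ?thesis using w by (simp add: q_\<phi> field_simps eval_nat_numeral)
qed

lemma ibp_approx_\<phi>_exp_tendsto_zero: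
  "((\<lambda>x. ibp_approx p q (\<phi> (of_real x)) * exp (of_real x)) \<longlongrightarrow> 0) at_bot"
proof (rule tendsto_zero_if_bigo)
  let ?e = "(real (degree p) + 1 - real (degree q)) / real (degree q)"
  show "(\<lambda>x. ibp_approx p q (\<phi> (of_real x)) * exp (of_real x))
      \<in> O[at_bot](\<lambda>x. of_real (norm (complex_of_real x) powr ?e * exp x))"
    using bigo_mult_exp[OF landau_o.big.compose[OF ibp_approx_\<phi>_bigo filterlim_of_real_at_bot_Gdom], where h = of_real]
    by simp
  show "((\<lambda>x. complex_of_real (norm (complex_of_real x) powr ?e * exp x)) \<longlongrightarrow> 0) at_bot"
    using tendsto_of_real[OF abs_powr_mult_exp_tendsto_zero_at_bot] by simp
qed

lemma gfun_\<phi>_limit: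
  obtains L where "((\<lambda>x. gfun p q c (\<phi> (of_real x))) \<longlongrightarrow> L) at_bot"
    "(\<lambda>w. (gfun p q c (\<phi> w) - ibp_approx p q (\<phi> w) * exp w - L) * exp (- w))
       \<in> O[at_infinity_in (Gdom R)](\<lambda>w. of_real (norm w powr ((real (degree p) + 1 - 3 * real (degree q)) / real (degree q))))"
proof -
  let ?F = "at_infinity_in (Gdom R)" and ?\<alpha> = "(real (degree p) + 1 - 3 * real (degree q)) / real (degree q)"
  define K where "K w = gfun p q c (\<phi> w) - ibp_approx p q (\<phi> w) * exp (poly q (\<phi> w))" for w
  have "\<forall>\<^sub>F w in ?F. (K has_field_derivative
      poly (quot_deriv_num q 3 (quot_deriv_num q 1 p)) (\<phi> w) / poly (pderiv q) (\<phi> w) ^ 5 * exp w) (at w)"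
    using eventually_mem_at_infinity_in unfolding K_def
    by (rule eventually_mono) (rule has_field_derivative_ibp_remainder)
  then obtain L where L: "((\<lambda>x. K (of_real x)) \<longlongrightarrow> L) at_bot"
    and K_L: "(\<lambda>w. K w - L) \<in> O[?F](\<lambda>w. of_real (norm w powr ?\<alpha> * exp (Re w)))"
    by (erule slit_exterior_limit[OF _ ibp_remainder_\<phi>_bigo])
  have K_eq: "\<forall>\<^sub>F w in ?F. K w = gfun p q c (\<phi> w) - ibp_approx p q (\<phi> w) * exp w"
    using eventually_mem_at_infinity_in by eventually_elim (simp add: K_def q_\<phi>)
  show thesis
  proof (rule that)
    have "\<forall>\<^sub>F x in at_bot. K (of_real x) + ibp_approx p q (\<phi> (of_real x)) * exp (of_real x)
        = gfun p q c (\<phi> (of_real x))"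
      using filterlim_of_real_at_bot_Gdom[THEN filterlim_iff[THEN iffD1], rule_format, OF K_eq]
      by eventually_elim simp
    then show "((\<lambda>x. gfun p q c (\<phi> (of_real x))) \<longlongrightarrow> L) at_bot"
      using tendsto_add[OF L ibp_approx_\<phi>_exp_tendsto_zero] by (auto intro: Lim_transform_eventually)
    have "(\<lambda>w. (K w - L) * exp (- w)) \<in> O[?F](\<lambda>w. of_real (norm w powr ?\<alpha> * exp (Re w) * exp (Re (- w))))"
      by (rule bigo_mult_exp[OF K_L])
    then show "(\<lambda>w. (gfun p q c (\<phi> w) - ibp_approx p q (\<phi> w) * exp w - L) * exp (- w))
       \<in> O[?F](\<lambda>w. of_real (norm w powr ?\<alpha>))"
      using K_eq by (subst (asm) landau_o.big.in_cong) (auto elim: eventually_mono simp: exp_minus field_simps)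
  qed
qed

lemma times_pderiv_q_over_p_bigo:
  assumes "f \<in> O[at_infinity_in (Gdom R)](\<lambda>w. of_real (norm w powr ((real (degree p) + 1 - 3 * real (degree q)) / real (degree q))))"
  shows "(\<lambda>w. f w * (poly (pderiv q) (\<phi> w) / poly p (\<phi> w)))
           \<in> O[at_infinity_in (Gdom R)](\<lambda>w. of_real (norm w powr (- 1 - 1 / real (degree q))))"
proof -
  let ?F = "at_infinity_in (Gdom R)" and ?m = "real (degree p)" and ?d = "real (degree q)"
  have "(\<lambda>w. poly (pderiv q) (\<phi> w) / poly p (\<phi> w)) \<in> \<Theta>[?F](\<lambda>w. of_real (norm w powr ((?d - 1 - ?m) / ?d)))"
    using p_nonzero degree_q
    by (intro poly_quotient_\<phi>_bigtheta) (auto simp: pderiv_eq_0_iff degree_pderiv)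
  from landau_o.big.mult[OF assms bigthetaD1[OF this]]
  have "(\<lambda>w. f w * (poly (pderiv q) (\<phi> w) / poly p (\<phi> w)))
      \<in> O[?F](\<lambda>w. of_real (norm w powr ((?m + 1 - 3 * ?d) / ?d)) * of_real (norm w powr ((?d - 1 - ?m) / ?d)))" .
  moreover have "(?m + 1 - 3 * ?d) / ?d + (?d - 1 - ?m) / ?d = - 2"
    using degree_q by (simp add: field_simps)
  ultimately have "(\<lambda>w. f w * (poly (pderiv q) (\<phi> w) / poly p (\<phi> w))) \<in> O[?F](\<lambda>w. of_real (norm w powr (- 2)))"
    by (simp flip: of_real_mult powr_add)
  also have "(\<lambda>w. complex_of_real (norm w powr (- 2))) \<in> O[?F](\<lambda>w. of_real (norm w powr (- 1 - 1 / ?d)))"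
    using degree_q by (intro powr_bigo_powr_at_infinity_in) simp
  finally show ?thesis .
qed

theorem newton_f_asymptotics:
  fixes c :: complex
  defines "c\<^sub>S \<equiv> Lim at_bot (\<lambda>x::real. gfun p q c (\<phi> (complex_of_real x)))"
    and "lam \<equiv> complex_of_real ((real (degree q) - 1 - real (degree p)) / real (degree q))"
  shows "\<exists>E. E \<in> O[at_infinity_in (Gdom R)](\<lambda>w. complex_of_real (norm w powr (-1 - 1 / real (degree q)))) \<and>
           (\<forall>\<^sub>F w in at_infinity_in (Gdom R).
              newton_f p q c (\<phi> w) =
                \<phi> w - (1 / poly (pderiv q) (\<phi> w)) * (1 + lam / w + E w) - c\<^sub>S * exp (- w) / poly p (\<phi> w))"
proof -
  let ?F = "at_infinity_in (Gdom R)"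
  obtain L where lim: "((\<lambda>x. gfun p q c (\<phi> (of_real x))) \<longlongrightarrow> L) at_bot"
    and decay: "(\<lambda>w. (gfun p q c (\<phi> w) - ibp_approx p q (\<phi> w) * exp w - L) * exp (- w))
       \<in> O[?F](\<lambda>w. of_real (norm w powr ((real (degree p) + 1 - 3 * real (degree q)) / real (degree q))))"
    by (erule gfun_\<phi>_limit)
  have "c\<^sub>S = L" unfolding c\<^sub>S_def using lim by (rule tendsto_Lim[rotated]) simp
  define E where "E w = (gfun p q c (\<phi> w) - ibp_approx p q (\<phi> w) * exp w - L) * exp (- w)
      * (poly (pderiv q) (\<phi> w) / poly p (\<phi> w))
      - (poly (quot_deriv_num q 1 p) (\<phi> w) / (poly p (\<phi> w) * poly (pderiv q) (\<phi> w) ^ 2) + lam / w)" for w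
  have "E \<in> O[?F](\<lambda>w. complex_of_real (norm w powr (- 1 - 1 / real (degree q))))"
    unfolding E_def lam_def using times_pderiv_q_over_p_bigo[OF decay] correction_\<phi>_bigo
    by (rule sum_in_bigo(2))
  moreover have "\<forall>\<^sub>F w in ?F. newton_f p q c (\<phi> w) =
      \<phi> w - (1 / poly (pderiv q) (\<phi> w)) * (1 + lam / w + E w) - c\<^sub>S * exp (- w) / poly p (\<phi> w)"
    using eventually_poly_p_\<phi>_nonzero eventually_mem_at_infinity_in eventually_norm_ge_at_infinity_in[where B = 1]
  proof eventually_elim
    case (elim w)
    then have "w \<noteq> 0" by auto
    with elim show ?case
      using newton_step_expansion[of "poly p (\<phi> w)" "poly (pderiv q) (\<phi> w)" "exp w" w "\<phi> w"]
        pderiv_q_\<phi>_nonzero[of w]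
      by (simp add: newton_f_def E_def ibp_approx_def q_\<phi> \<open>c\<^sub>S = L\<close> exp_minus inverse_eq_divide)
  qed
  ultimately show ?thesis by blast
qed

end

theorem corollary4p3:
  fixes p q :: "complex poly" and m d :: nat and c :: complex and R :: real
    and S :: "complex set" and \<phi> :: "complex \<Rightarrow> complex"
  assumes degp: "degree p = m" and leadp: "lead_coeff p = of_nat d"
    and degq: "degree q = d" and d1: "d \<ge> 1" and monq: "lead_coeff q = 1"
    and Rpos: "R > 0"
    and critval: "\<And>z. poly (pderiv q) z = 0 \<Longrightarrow> poly q z \<in> ball 0 R"
    and qbound: "\<And>z. norm z \<ge> (1/2) * R powr (1 / real d) \<Longrightarrow>
                   (1/2) ^ d * norm z ^ d \<le> norm (poly q z) \<and> norm (poly q z) \<le> 2 ^ d * norm z ^ d"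
    and S: "S \<in> components (poly q -` Gdom R)"
    and \<phi>_hol: "\<phi> holomorphic_on Gdom R"
    and \<phi>_inv: "\<And>w. w \<in> Gdom R \<Longrightarrow> poly q (\<phi> w) = w"
    and \<phi>_img: "\<phi> ` Gdom R = S"
  defines "cS \<equiv> Lim at_bot (\<lambda>x::real. gfun p q c (\<phi> (complex_of_real x)))"
    and "lam \<equiv> complex_of_real ((real d - 1 - real m) / real d)"
  shows "\<exists>E :: complex \<Rightarrow> complex.
           E \<in> O[inf at_infinity (principal (Gdom R))](\<lambda>w. complex_of_real (norm w powr (-1 - 1 / real d))) \<and>
           (\<forall>\<^sub>F w in inf at_infinity (principal (Gdom R)).
              newton_f p q c (\<phi> w) =
                \<phi> w - (1 / poly (pderiv q) (\<phi> w)) * (1 + lam / w + E w)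
                    - cS * exp (- w) / poly p (\<phi> w))"
proof -
  interpret newton_exterior p q R \<phi>
  proof
    show "p \<noteq> 0" using leadp d1 by auto
    show "1 \<le> degree q" using degq d1 by simp
    show "norm (poly q z) < R" if "poly (pderiv q) z = 0" for z
      using critval[OF that] by simp
  qed (use \<phi>_hol \<phi>_inv in auto)
  show ?thesis
    using newton_f_asymptotics[of c] degp degq unfolding cS_def lam_def by simp
qed

end
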